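(* Let $\mathbf{H}$ be a finite commutative semihypergroup with states $e_1,\dots,e_n$ that is derived from a group. Then for each $i$, all diagonal entries of the matrix $A_i$ are equal: $a_{i,j}(j)=a_{i,i}(i)$ for all $i,j\in\{1,\dots,n\}$.
   Context: A finite commutative semihypergroup $\mathbf{H}$ with $n$ states $e_1,\dots,e_n$ is given by a convolution $e_i*e_j=\sum_{k=1}^n a_{i,j}(k)e_k$ ($i,j=1,\dots,n$), extended bilinearly, where $a_{i,j}(k)\ge 0$, $\sum_{k=1}^n a_{i,j}(k)=1$ for all $i,j$, the convolution is associative and commutative ($a_{i,j}(k)=a_{j,i}(k)$). Let $a_{i,j}\in\mathbb{R}^n$ denote the column vector $(a_{i,j}(1),\dots,a_{i,j}(n))^T$; let $A_i$ be the $n\times n$ matrix with columns $a_{i,1},\dots,a_{i,n}$ (so its $(k,j)$ entry is $a_{i,j}(k)$) and $B_i$ the matrix with columns $a_{1,i},\dots,a_{n,i}$. $\mathbf{H}$ is called derived from a group if it satisfies condition (A): the set $\{a_{i,j}: 1\le i,j\le n\}$ contains exactly $n$ distinct vectors, and for each $i$ the columns of $A_i$ are linearly independent and the columns of $B_i$ are linearly independent. *)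

theory Defs
  imports Complex_Main
begin

text \<open>States e_1..e_n are indexed by a finite type 'n (n = CARD('n)).
  a i j k is the coefficient a_{i,j}(k) of e_k in e_i * e_j.\<close>

definition fin_comm_semihypergroup :: "('n::finite \<Rightarrow> 'n \<Rightarrow> 'n \<Rightarrow> real) \<Rightarrow> bool" where
  "fin_comm_semihypergroup a \<longleftrightarrow>
     (\<forall>i j k. a i j k \<ge> 0) \<and>
     (\<forall>i j. (\<Sum>k\<in>UNIV. a i j k) = 1) \<and>
     (\<forall>i j. a i j = a j i) \<and>
     (\<forall>i j k m. (\<Sum>l\<in>UNIV. a i j l * a l k m) = (\<Sum>l\<in>UNIV. a j k l * a i l m))"

definition lin_indep_family :: "('n::finite \<Rightarrow> 'n \<Rightarrow> real) \<Rightarrow> bool" where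
  "lin_indep_family v \<longleftrightarrow>
     (\<forall>c :: 'n \<Rightarrow> real. (\<forall>k. (\<Sum>j\<in>UNIV. c j * v j k) = 0) \<longrightarrow> (\<forall>j. c j = 0))"

text \<open>Condition (A). Columns of A_i are a_{i,1},...,a_{i,n}; columns of B_i are a_{1,i},...,a_{n,i}.\<close>
definition derived_from_group :: "('n::finite \<Rightarrow> 'n \<Rightarrow> 'n \<Rightarrow> real) \<Rightarrow> bool" where
  "derived_from_group a \<longleftrightarrow>
     card ((\<lambda>(i, j). a i j) ` UNIV) = card (UNIV :: 'n set) \<and>
     (\<forall>i. lin_indep_family (\<lambda>j. a i j)) \<and>
     (\<forall>i. lin_indep_family (\<lambda>j. a j i))"

end

theory Submission
  imports Defs
begin

text \<open>By condition (A) each map k \<mapsto> a_{j,k} is injective with values in the n-element set of all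
  a_{i,k}, hence onto it; so a_j \<circ> \<sigma> = a_j' for a permutation \<sigma>, and \<sigma> j = j' by commutativity.
  Associativity and commutativity give (e_i * e_j) * e_j' = (e_i * e_j') * e_j. Expanding both sides
  in the linearly independent columns of A_j shows that a_{i,j'} is a_{i,j} composed with the
  inverse of \<sigma>; evaluating at j' yields a_{i,j'}(j') = a_{i,j}(j).\<close>

lemma lin_indep_family_cancel:
  assumes "lin_indep_family v"
    and "\<And>k. (\<Sum>j\<in>UNIV. c j * v j k) = (\<Sum>j\<in>UNIV. d j * v j k)"
  shows "c = d"
proof -
  have "\<forall>k. (\<Sum>j\<in>UNIV. (c j - d j) * v j k) = 0"
    using assms(2) by (simp add: left_diff_distrib sum_subtractf)
  with assms(1) show ?thesis
    unfolding lin_indep_family_def by fastforce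
qed

lemma lin_indep_family_imp_inj:
  assumes "lin_indep_family v"
  shows "inj v"
proof (rule injI)
  fix p q assume "v p = v q"
  then have "\<And>k. (\<Sum>j\<in>UNIV. of_bool (j = p) * v j k) = (\<Sum>j\<in>UNIV. of_bool (j = q) * v j k)"
    by simp
  then have "(\<lambda>j. of_bool (j = p) :: real) = (\<lambda>j. of_bool (j = q))"
    by (rule lin_indep_family_cancel[OF assms])
  then have "(of_bool (p = p) :: real) = of_bool (p = q)"
    by (rule fun_cong)
  then show "p = q"
    by simp
qed

context
  fixes a :: "'n::finite \<Rightarrow> 'n \<Rightarrow> 'n \<Rightarrow> real"
  assumes semihypergroup: "fin_comm_semihypergroup a"
begin

lemma table_comm: "a i j = a j i"
  using semihypergroup unfolding fin_comm_semihypergroup_def by blast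

lemma table_assoc: "(\<Sum>l\<in>UNIV. a i j l * a l k m) = (\<Sum>l\<in>UNIV. a j k l * a i l m)"
  using semihypergroup unfolding fin_comm_semihypergroup_def by blast

lemma table_right_swap: "(\<Sum>l\<in>UNIV. a i j l * a l k m) = (\<Sum>l\<in>UNIV. a i k l * a l j m)"
proof -
  have "(\<Sum>l\<in>UNIV. a i j l * a l k m) = (\<Sum>l\<in>UNIV. a j k l * a i l m)"
    by (rule table_assoc)
  also have "\<dots> = (\<Sum>l\<in>UNIV. a k j l * a i l m)"
    by (simp only: table_comm[of j k])
  also have "\<dots> = (\<Sum>l\<in>UNIV. a i k l * a l j m)"
    by (rule table_assoc[symmetric])
  finally show ?thesis .
qed

context
  assumes derived: "derived_from_group a"
begin

lemma row_lin_indep: "lin_indep_family (a i)"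
  using derived unfolding derived_from_group_def by simp

lemma row_inj: "inj (a i)"
  by (rule lin_indep_family_imp_inj[OF row_lin_indep])

lemma range_row: "range (a i) = (\<lambda>(i, j). a i j) ` UNIV"
proof (rule card_subset_eq)
  show "card (range (a i)) = card ((\<lambda>(i, j). a i j) ` UNIV)"
    using derived by (simp add: derived_from_group_def card_image row_inj)
qed auto

lemma row_reindex:
  fixes j j' :: 'n
  obtains \<sigma> where "bij \<sigma>" "\<sigma> j = j'" "\<And>k. a j (\<sigma> k) = a j' k"
proof
  let ?\<sigma> = "\<lambda>k. inv (a j) (a j' k)"
  show row: "a j (?\<sigma> k) = a j' k" for k
  proof (rule f_inv_into_f)
    show "a j' k \<in> range (a j)"
      using range_row[of j] range_row[of j'] by blast
  qed
  show "?\<sigma> j = j'"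
    using row[of j] table_comm[of j' j] row_inj[of j] by (simp add: inj_eq)
  have "inj ?\<sigma>"
  proof (rule injI)
    fix x y assume "?\<sigma> x = ?\<sigma> y"
    then have "a j' x = a j' y"
      using row by metis
    then show "x = y"
      using row_inj[of j'] by (simp add: inj_eq)
  qed
  then show "bij ?\<sigma>"
    by (simp add: bij_def finite_UNIV_inj_surj)
qed

lemma diagonal_row_const: "a i j j = a i j' j'"
proof -
  obtain \<sigma> where \<sigma>: "bij \<sigma>" "\<sigma> j = j'" "\<And>k. a j (\<sigma> k) = a j' k"
    using row_reindex[of j j'] by blast
  have "(\<Sum>l\<in>UNIV. a i j (inv \<sigma> l) * a j l m) = (\<Sum>l\<in>UNIV. a i j' l * a j l m)" for m
  proof -
    have "(\<Sum>l\<in>UNIV. a i j (inv \<sigma> l) * a j l m) = (\<Sum>k\<in>UNIV. a i j k * a j (\<sigma> k) m)"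
      using sum.reindex_bij_betw[OF \<sigma>(1), of "\<lambda>l. a i j (inv \<sigma> l) * a j l m"] \<sigma>(1)
      by (simp add: bij_is_inj)
    also have "\<dots> = (\<Sum>k\<in>UNIV. a i j k * a k j' m)"
      using \<sigma>(3) table_comm[of j'] by presburger
    also have "\<dots> = (\<Sum>l\<in>UNIV. a i j' l * a l j m)"
      by (rule table_right_swap)
    also have "\<dots> = (\<Sum>l\<in>UNIV. a i j' l * a j l m)"
      using table_comm[of _ j] by presburger
    finally show ?thesis .
  qed
  then have "(\<lambda>l. a i j (inv \<sigma> l)) = a i j'"
    by (rule lin_indep_family_cancel[OF row_lin_indep])
  then have "a i j (inv \<sigma> j') = a i j' j'"
    by metis
  then show ?thesis
    using \<sigma> by (metis bij_is_inj inv_f_f)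
qed

end

end

theorem corollary2:
  fixes a :: "'n::finite \<Rightarrow> 'n \<Rightarrow> 'n \<Rightarrow> real"
  assumes "fin_comm_semihypergroup a"
    and "derived_from_group a"
  shows "\<forall>i j. a i j j = a i i i"
  using diagonal_row_const[OF assms] by blast

end
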